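(* Consider the following model. States $\omega_t\in\{0,1\}$, $t\in\{1,2\}$, with $\Pr[\omega_1=1]=\mu_0\in(0,1)$ and $\Pr[\omega_2=\omega\mid\omega_1=\omega]=\rho\in(1/2,1)$. In each period an agent A chooses $e_t\in\{0,1\}$; if $e_t=1$ he observes $\omega_t$, if $e_t=0$ he observes $\omega_t$ with probability $\pi\in(0,1)$ and nothing otherwise; he reports $r_t\in\{\varnothing,\omega_t\}$ if he observed $\omega_t$, else $r_t=\varnothing$. A's payoff is $x-c(e_1+e_2)$, $c>0$, with $x=\hat x(r_1,r_2)$. A mechanism consists of $\sigma_1\in\{0,1\}$, $\sigma_2:\{\varnothing,0,1\}\to\{0,1\}$, $\hat x:\{\varnothing,0,1\}^2\to\{0,1\}$; A best-responds, following the recommendation and disclosing when indifferent. A mechanism is IC if at every history occurring with positive probability A optimally obeys the testing recommendation and discloses every observed result, and $\hat x(r_1,\varnothing)=0$ whenever $\sigma_2(r_1)=1$. Let $\gamma=c/(1-\pi)$, and for $r_1\in\{1,0,\varnothing\}$ let $\mu_2=\rho,\ 1-\rho,\ \rho\mu_0+(1-\rho)(1-\mu_0)$ respectively, and $\mathbb{E}_{\mu_2}[\hat x(r_1,\tilde r_2)]=\mu_2\hat x(r_1,1)+(1-\mu_2)\hat x(r_1,0)$. In any IC mechanism, if $\sigma_2(r_1)=0$ for some $r_1$ occurring with positive probability, then $$\gamma\ \ge\ \mathbb{E}_{\mu_2}[\hat x(r_1,\tilde r_2)]-\hat x(r_1,\varnothing)\ \ge\ 0.$$ *)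

theory Defs
  imports Complex_Main
begin

text \<open>States omega_t :: bool (True = 1).
  Reports r :: bool option (None = empty report, Some w = disclosed result w).
  Mechanism: \<sigma>1 :: bool, \<sigma>2 :: bool option \<Rightarrow> bool, x :: bool option \<Rightarrow> bool option \<Rightarrow> real
  (values in {0,1}). Parameters: mu0 = Pr[\<omega>1 = 1], rho = persistence, pi = prob. of
  free observation when not testing, c = testing cost.\<close>

definition pr :: "real \<Rightarrow> bool \<Rightarrow> real" where
  "pr m w = (if w then m else 1 - m)"

definition mu2 :: "real \<Rightarrow> real \<Rightarrow> bool option \<Rightarrow> real" where
  "mu2 mu0 rho r = (case r of Some True \<Rightarrow> rho | Some False \<Rightarrow> 1 - rho
                    | None \<Rightarrow> rho * mu0 + (1 - rho) * (1 - mu0))"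

definition obsp :: "real \<Rightarrow> bool \<Rightarrow> real" where
  "obsp p e = (if e then 1 else p)"

definition rep :: "bool \<Rightarrow> bool \<Rightarrow> bool option" where
  "rep b w = (if b then Some w else None)"

text \<open>Agent strategies: period-1 test, period-1 disclosure (given observed \<omega>1),
  period-2 test (given own observation o1 and report r1), period-2 disclosure.\<close>
record strat =
  s_e1 :: bool
  s_d1 :: "bool \<Rightarrow> bool"
  s_e2 :: "bool option \<Rightarrow> bool option \<Rightarrow> bool"
  s_d2 :: "bool option \<Rightarrow> bool option \<Rightarrow> bool \<Rightarrow> bool"

text \<open>Period-2 continuation payoff (sunk period-1 cost omitted) at the agent's history
  (o1 = own period-1 observation, r1 = period-1 report), using test choice e and
  disclosure rule d.\<close>
definition W2 :: "real \<Rightarrow> real \<Rightarrow> real \<Rightarrow> real \<Rightarrow> (bool option \<Rightarrow> bool option \<Rightarrow> real)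
    \<Rightarrow> bool option \<Rightarrow> bool option \<Rightarrow> bool \<Rightarrow> (bool \<Rightarrow> bool) \<Rightarrow> real" where
  "W2 mu0 rho p c x o1 r1 e d =
     - c * of_bool e
     + (\<Sum>w\<in>UNIV. pr (mu2 mu0 rho o1) w *
          (obsp p e * x r1 (rep (d w) w) + (1 - obsp p e) * x r1 None))"

text \<open>Continuation payoff after the period-1 observation o1 (sunk cost omitted).\<close>
definition V1 :: "real \<Rightarrow> real \<Rightarrow> real \<Rightarrow> real \<Rightarrow> (bool option \<Rightarrow> bool option \<Rightarrow> real)
    \<Rightarrow> strat \<Rightarrow> bool option \<Rightarrow> real" where
  "V1 mu0 rho p c x s o1 =
     (case o1 of
        None \<Rightarrow> W2 mu0 rho p c x None None (s_e2 s None None) (s_d2 s None None)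
      | Some w \<Rightarrow> (let r1 = rep (s_d1 s w) w in
                   W2 mu0 rho p c x o1 r1 (s_e2 s o1 r1) (s_d2 s o1 r1)))"

definition U0 :: "real \<Rightarrow> real \<Rightarrow> real \<Rightarrow> real \<Rightarrow> (bool option \<Rightarrow> bool option \<Rightarrow> real)
    \<Rightarrow> strat \<Rightarrow> real" where
  "U0 mu0 rho p c x s =
     - c * of_bool (s_e1 s)
     + (\<Sum>w\<in>UNIV. pr mu0 w *
          (obsp p (s_e1 s) * V1 mu0 rho p c x s (Some w)
           + (1 - obsp p (s_e1 s)) * V1 mu0 rho p c x s None))"

text \<open>Probability, under obedient play (e1 = \<sigma>1), of the period-1 observation o1
  (which equals the period-1 report under truthful disclosure).\<close>
definition reach1 :: "real \<Rightarrow> real \<Rightarrow> bool \<Rightarrow> bool option \<Rightarrow> real" where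
  "reach1 mu0 p \<sigma>1 o1 =
     (case o1 of None \<Rightarrow> 1 - obsp p \<sigma>1 | Some w \<Rightarrow> obsp p \<sigma>1 * pr mu0 w)"

definition obedient :: "bool \<Rightarrow> (bool option \<Rightarrow> bool) \<Rightarrow> strat" where
  "obedient \<sigma>1 \<sigma>2 = \<lparr>s_e1 = \<sigma>1, s_d1 = (\<lambda>_. True),
                       s_e2 = (\<lambda>oo r. \<sigma>2 r), s_d2 = (\<lambda>oo r w. True)\<rparr>"

definition IC :: "real \<Rightarrow> real \<Rightarrow> real \<Rightarrow> real \<Rightarrow> bool \<Rightarrow> (bool option \<Rightarrow> bool)
    \<Rightarrow> (bool option \<Rightarrow> bool option \<Rightarrow> real) \<Rightarrow> bool" where
  "IC mu0 rho p c \<sigma>1 \<sigma>2 x \<longleftrightarrow>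
     (\<forall>s. U0 mu0 rho p c x s \<le> U0 mu0 rho p c x (obedient \<sigma>1 \<sigma>2))
   \<and> (\<forall>o1 s. reach1 mu0 p \<sigma>1 o1 > 0 \<longrightarrow>
         V1 mu0 rho p c x s o1 \<le> V1 mu0 rho p c x (obedient \<sigma>1 \<sigma>2) o1)
   \<and> (\<forall>o1 e d. reach1 mu0 p \<sigma>1 o1 > 0 \<longrightarrow>
         W2 mu0 rho p c x o1 o1 e d \<le> W2 mu0 rho p c x o1 o1 (\<sigma>2 o1) (\<lambda>_. True))
   \<and> (\<forall>o1 w. reach1 mu0 p \<sigma>1 o1 > 0
              \<and> obsp p (\<sigma>2 o1) * pr (mu2 mu0 rho o1) w > 0 \<longrightarrow>
         x o1 None \<le> x o1 (Some w))
   \<and> (\<forall>r1. \<sigma>2 r1 \<longrightarrow> x r1 None = 0)"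

definition Ex2 :: "real \<Rightarrow> real \<Rightarrow> (bool option \<Rightarrow> bool option \<Rightarrow> real) \<Rightarrow> bool option \<Rightarrow> real" where
  "Ex2 mu0 rho x r1 = mu2 mu0 rho r1 * x r1 (Some True) + (1 - mu2 mu0 rho r1) * x r1 (Some False)"

end

theory Submission
  imports Defs
begin

(* When the agent is told not to test after report r1, testing anyway would raise the
   probability of observing the second state from p to 1; with full disclosure this gains
   (1 - p) * (E[x(r1, r2)] - x(r1, None)) at cost c, so obedience forces this gain to be at
   most c. The gain is nonnegative because optimal disclosure of each observable result w
   requires x(r1, Some w) >= x(r1, None). *)

lemma mu2_bounds:
  assumes "0 < mu0" "mu0 < 1" "0 < rho" "rho < 1"
  shows "0 < mu2 mu0 rho r" "mu2 mu0 rho r < 1"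
proof -
  have "0 < rho * mu0 + (1 - rho) * (1 - mu0)"
    using assms by (simp add: add_pos_pos)
  moreover have "0 < rho * (1 - mu0) + (1 - rho) * mu0"
    using assms by (simp add: add_pos_pos)
  ultimately show "0 < mu2 mu0 rho r" "mu2 mu0 rho r < 1"
    using assms by (auto simp: mu2_def algebra_simps split: option.split bool.split)
qed

lemma W2_disclose_all:
  "W2 mu0 rho p c x r1 r1 e (\<lambda>_. True)
     = obsp p e * Ex2 mu0 rho x r1 + (1 - obsp p e) * x r1 None - c * of_bool e"
  by (simp add: W2_def Ex2_def UNIV_bool pr_def rep_def algebra_simps)

lemma IC_testing_gain_le_cost:
  assumes "IC mu0 rho p c \<sigma>1 \<sigma>2 x" "reach1 mu0 p \<sigma>1 r1 > 0" "\<not> \<sigma>2 r1"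
  shows "(1 - p) * (Ex2 mu0 rho x r1 - x r1 None) \<le> c"
proof -
  have "W2 mu0 rho p c x r1 r1 True (\<lambda>_. True) \<le> W2 mu0 rho p c x r1 r1 False (\<lambda>_. True)"
    using assms unfolding IC_def by force
  then show ?thesis
    by (simp add: W2_disclose_all obsp_def algebra_simps)
qed

lemma IC_disclosure_gain_nonneg:
  assumes "0 < mu0" "mu0 < 1" "0 < rho" "rho < 1" "0 < p"
    and "IC mu0 rho p c \<sigma>1 \<sigma>2 x" "reach1 mu0 p \<sigma>1 r1 > 0"
  shows "0 \<le> Ex2 mu0 rho x r1 - x r1 None"
proof -
  define m where "m = mu2 mu0 rho r1"
  have m: "0 < m" "m < 1"
    using mu2_bounds[OF assms(1-4)] by (auto simp: m_def)
  have disclose: "x r1 None \<le> x r1 (Some w)" for w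
  proof -
    have "obsp p (\<sigma>2 r1) * pr m w > 0"
      using m \<open>0 < p\<close> by (simp add: obsp_def pr_def)
    then show ?thesis
      using assms(6,7) unfolding IC_def m_def by blast
  qed
  have "Ex2 mu0 rho x r1 - x r1 None
          = m * (x r1 (Some True) - x r1 None) + (1 - m) * (x r1 (Some False) - x r1 None)"
    by (simp add: Ex2_def m_def algebra_simps)
  also have "\<dots> \<ge> 0"
    using m disclose[of True] disclose[of False] by simp
  finally show ?thesis .
qed

theorem lemma5:
  fixes mu0 rho p c :: real and \<sigma>1 :: bool and \<sigma>2 :: "bool option \<Rightarrow> bool"
    and x :: "bool option \<Rightarrow> bool option \<Rightarrow> real" and r1 :: "bool option"
  assumes "0 < mu0" "mu0 < 1" "1/2 < rho" "rho < 1" "0 < p" "p < 1" "0 < c"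
    and "\<forall>a b. x a b \<in> {0, 1}"
    and "IC mu0 rho p c \<sigma>1 \<sigma>2 x"
    and "reach1 mu0 p \<sigma>1 r1 > 0"
    and "\<not> \<sigma>2 r1"
  shows "c / (1 - p) \<ge> Ex2 mu0 rho x r1 - x r1 None \<and> Ex2 mu0 rho x r1 - x r1 None \<ge> 0"
proof
  have "(1 - p) * (Ex2 mu0 rho x r1 - x r1 None) \<le> c"
    using IC_testing_gain_le_cost assms(9-11) .
  then show "c / (1 - p) \<ge> Ex2 mu0 rho x r1 - x r1 None"
    using \<open>p < 1\<close> by (simp add: pos_le_divide_eq mult.commute)
  show "Ex2 mu0 rho x r1 - x r1 None \<ge> 0"
    using IC_disclosure_gain_nonneg assms(1,2,5,9,10) \<open>1/2 < rho\<close> \<open>rho < 1\<close> by simp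
qed

end
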